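(* Let $t$ be transcendental over $\mathbb{Q}$, let $R=\mathbb{Z}[t^2,t^3]$, and let $S$ be the integral closure of $R$ in its field of fractions $\mathbb{Q}(t)$. Then $S=\mathbb{Z}[t]\neq R$, and every monic polynomial in $R[x]$ of degree at least $2$ that is decomposable over $S$ is decomposable over $R$.
   Context: For a ring $A$ and $f\in A[x]$ with $\deg f\ge 2$, $f$ is called decomposable over $A$ if $f(x)=g(h(x))$ for some $g,h\in A[x]$ of degree at least $2$, and indecomposable over $A$ otherwise. *)

theory Defs
  imports "HOL-Computational_Algebra.Polynomial"
begin

inductive_set subring_gen :: "'a::comm_ring_1 set \<Rightarrow> 'a set" for X where
  gen: "x \<in> X \<Longrightarrow> x \<in> subring_gen X"
| one: "1 \<in> subring_gen X"
| add: "a \<in> subring_gen X \<Longrightarrow> b \<in> subring_gen X \<Longrightarrow> a + b \<in> subring_gen X"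
| neg: "a \<in> subring_gen X \<Longrightarrow> - a \<in> subring_gen X"
| mult: "a \<in> subring_gen X \<Longrightarrow> b \<in> subring_gen X \<Longrightarrow> a * b \<in> subring_gen X"

definition frac_field :: "'a::field set \<Rightarrow> 'a set" where
  "frac_field A = {a / b | a b. a \<in> A \<and> b \<in> A \<and> b \<noteq> 0}"

definition poly_over :: "'a::zero set \<Rightarrow> 'a poly \<Rightarrow> bool" where
  "poly_over A p \<longleftrightarrow> (\<forall>i. coeff p i \<in> A)"

definition integral_closure :: "'a::comm_ring_1 set \<Rightarrow> 'a set \<Rightarrow> 'a set" where
  "integral_closure A K =
     {x \<in> K. \<exists>p. poly_over A p \<and> lead_coeff p = 1 \<and> poly p x = 0}"

definition decomposable_over :: "'a::comm_ring_1 set \<Rightarrow> 'a poly \<Rightarrow> bool" where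
  "decomposable_over A f \<longleftrightarrow>
     (\<exists>g h. poly_over A g \<and> poly_over A h \<and> degree g \<ge> 2 \<and> degree h \<ge> 2 \<and> f = pcompose g h)"

definition transcendental_over_Q :: "'a::field_char_0 \<Rightarrow> bool" where
  "transcendental_over_Q t \<longleftrightarrow> (\<forall>p :: rat poly. p \<noteq> 0 \<longrightarrow> poly (map_poly of_rat p) t \<noteq> 0)"

end

theory Submission
  imports Defs "HOL-Computational_Algebra.Polynomial_Factorial"
begin

(*
  Evaluation at t identifies \<int>[t] with \<int>[X], and R with the polynomials without linear term.
  Since \<int>[X] is factorial it is integrally closed, and t\<^sup>2 is a common denominator for
  \<int>[t], so S = \<int>[t].

  For decompositions, reduce coefficients modulo t\<^sup>2: on (\<int>[X])[x], taking the constant and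
  the linear coefficient of every coefficient gives a ring homomorphism E = inner_coeff 0 and an
  E-derivation D = inner_coeff 1 with the chain rule D(G \<circ> H) = DG \<circ> EH + ((EG)' \<circ> EH) \<cdot> DH. If f = G \<circ> H is monic, the
  leading coefficients of G and H are units, hence constants; after translating so that H(0) = 0
  we get deg DH < deg EH = deg H and DH(0) = 0. Now f \<in> R[x] means Df = 0, and comparing degrees
  modulo deg H forces DH = 0 and then DG = 0, i.e. G, H \<in> R[x].
*)

locale ring_hom =
  fixes \<phi> :: "'a::comm_ring_1 \<Rightarrow> 'b::comm_ring_1"
  assumes hom_add: "\<phi> (x + y) = \<phi> x + \<phi> y"
    and hom_mult: "\<phi> (x * y) = \<phi> x * \<phi> y"
    and hom_one: "\<phi> 1 = 1"
begin

declare hom_one [simp]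

lemma hom_zero [simp]: "\<phi> 0 = 0"
  using hom_add[of 0 0] by simp

lemma hom_uminus: "\<phi> (- x) = - \<phi> x"
  using hom_add[of "- x" x] by (simp add: eq_neg_iff_add_eq_0)

lemma hom_diff: "\<phi> (x - y) = \<phi> x - \<phi> y"
  using hom_add[of x "- y"] by (simp add: hom_uminus)

lemma hom_power: "\<phi> (x ^ n) = \<phi> x ^ n"
  by (induction n) (simp_all add: hom_mult)

lemma hom_sum: "\<phi> (sum f A) = (\<Sum>a\<in>A. \<phi> (f a))"
  by (induction A rule: infinite_finite_induct) (simp_all add: hom_add)

lemma map_poly_hom_add: "map_poly \<phi> (p + q) = map_poly \<phi> p + map_poly \<phi> q"
  by (rule poly_eqI) (simp add: coeff_map_poly hom_add)

lemma map_poly_hom_smult: "map_poly \<phi> (smult a p) = smult (\<phi> a) (map_poly \<phi> p)"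
  by (rule poly_eqI) (simp add: coeff_map_poly hom_mult)

lemma map_poly_hom_mult: "map_poly \<phi> (p * q) = map_poly \<phi> p * map_poly \<phi> q"
  by (induction p) (simp_all add: map_poly_pCons map_poly_hom_add map_poly_hom_smult)

lemma map_poly_hom_pcompose: "map_poly \<phi> (pcompose p q) = pcompose (map_poly \<phi> p) (map_poly \<phi> q)"
  by (induction p)
    (simp_all add: pcompose_pCons map_poly_pCons map_poly_hom_add map_poly_hom_mult)

lemma degree_map_poly_inj: "inj \<phi> \<Longrightarrow> degree (map_poly \<phi> p) = degree p"
  by (metis degree_map_poly hom_zero injD)

lemma poly_over_range_map_poly:
  assumes "poly_over (range \<phi>) p"
  obtains q where "p = map_poly \<phi> q"
proof
  define \<psi> where "\<psi> y = (if y = 0 then 0 else inv \<phi> y)" for y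
  show "p = map_poly \<phi> (map_poly \<psi> p)"
    using assms by (intro poly_eqI) (auto simp: coeff_map_poly \<psi>_def poly_over_def f_inv_into_f)
qed

end

interpretation of_int: ring_hom of_int
  by unfold_locales simp_all

definition int_poly_eval :: "'a::comm_ring_1 \<Rightarrow> int poly \<Rightarrow> 'a" where
  "int_poly_eval x p = poly (map_poly of_int p) x"

interpretation int_poly_eval: ring_hom "int_poly_eval x" for x
  by unfold_locales (simp_all add: int_poly_eval_def of_int.map_poly_hom_add of_int.map_poly_hom_mult)

lemma int_poly_eval_pCons: "int_poly_eval x (pCons a p) = of_int a + x * int_poly_eval x p"
  by (simp add: int_poly_eval_def map_poly_pCons)

lemma int_poly_eval_X: "int_poly_eval x [:0, 1:] = x"
  by (simp add: int_poly_eval_def map_poly_pCons)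

lemma int_poly_eval_monom: "int_poly_eval x (monom c n) = of_int c * x ^ n"
  by (simp add: int_poly_eval_def map_poly_monom poly_monom)

lemma coeff_mult_1:
  "coeff (p * q) 1 = coeff p 0 * coeff q 1 + coeff p 1 * coeff (q :: 'a::comm_semiring_0 poly) 0"
  by (simp add: coeff_mult numeral_2_eq_2 atMost_Suc add.commute)

lemma subring_gen_zero: "0 \<in> subring_gen X"
  using subring_gen.add[OF subring_gen.one subring_gen.neg[OF subring_gen.one]] by simp

lemma subring_gen_of_int: "of_int k \<in> subring_gen X"
proof -
  have of_nat: "of_nat n \<in> subring_gen X" for n
    by (induction n) (auto intro: subring_gen.add subring_gen.one subring_gen_zero)
  show ?thesis
    using of_nat[of "nat k"] subring_gen.neg[OF of_nat[of "nat (- k)"]]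
    by (cases "k \<ge> 0") simp_all
qed

lemma subring_gen_minimal:
  assumes "X \<subseteq> T" "1 \<in> T"
    and "\<And>a b. a \<in> T \<Longrightarrow> b \<in> T \<Longrightarrow> a + b \<in> T" "\<And>a. a \<in> T \<Longrightarrow> - a \<in> T"
    and "\<And>a b. a \<in> T \<Longrightarrow> b \<in> T \<Longrightarrow> a * b \<in> T"
  shows "subring_gen X \<subseteq> T"
proof
  show "a \<in> T" if "a \<in> subring_gen X" for a
    using that by induction (use assms in auto)
qed

lemma subring_gen_singleton: "subring_gen {x} = range (int_poly_eval x)"
proof
  show "subring_gen {x} \<subseteq> range (int_poly_eval x)"
  proof (rule subring_gen_minimal)
    show "{x} \<subseteq> range (int_poly_eval x)"
      by (metis int_poly_eval_X empty_subsetI insert_subset rangeI)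
    show "1 \<in> range (int_poly_eval x)"
      by (metis int_poly_eval.hom_one rangeI)
  qed (auto simp flip: int_poly_eval.hom_add int_poly_eval.hom_uminus int_poly_eval.hom_mult)
  show "range (int_poly_eval x) \<subseteq> subring_gen {x}"
  proof (rule image_subsetI)
    show "int_poly_eval x p \<in> subring_gen {x}" for p
      by (induction p) (auto simp: int_poly_eval_pCons subring_gen_zero
          intro: subring_gen.add subring_gen.mult subring_gen.gen subring_gen_of_int)
  qed
qed

lemma subring_gen_square_cube_mult:
  "x ^ 2 * int_poly_eval x q \<in> subring_gen {x ^ 2, x ^ 3} \<and>
   x ^ 3 * int_poly_eval x q \<in> subring_gen {x ^ 2, x ^ 3}"
proof (induction q)
  case (pCons a q)
  have gens: "x ^ 2 \<in> subring_gen {x ^ 2, x ^ 3}" "x ^ 3 \<in> subring_gen {x ^ 2, x ^ 3}"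
    by (simp_all add: subring_gen.gen)
  have "x ^ 2 * int_poly_eval x (pCons a q) = of_int a * x ^ 2 + x ^ 3 * int_poly_eval x q"
    "x ^ 3 * int_poly_eval x (pCons a q) = of_int a * x ^ 3 + x ^ 2 * (x ^ 2 * int_poly_eval x q)"
    by (simp_all add: int_poly_eval_pCons algebra_simps power_numeral_reduce)
  then show ?case
    using subring_gen.add[OF subring_gen.mult[OF subring_gen_of_int gens(1)]
        pCons.IH[THEN conjunct2]]
      subring_gen.add[OF subring_gen.mult[OF subring_gen_of_int gens(2)]
        subring_gen.mult[OF gens(1) pCons.IH[THEN conjunct1]]]
    by simp
qed (simp add: subring_gen_zero)

lemma subring_gen_square_cube:
  "subring_gen {x ^ 2, x ^ 3} = int_poly_eval x ` {p. coeff p 1 = 0}"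
proof
  show "subring_gen {x ^ 2, x ^ 3} \<subseteq> int_poly_eval x ` {p. coeff p 1 = 0}"
  proof (rule subring_gen_minimal)
    have "x ^ n \<in> int_poly_eval x ` {p. coeff p 1 = 0}" if "n \<ge> 2" for n
      using that by (intro image_eqI[of _ _ "monom 1 n"]) (simp_all add: int_poly_eval_monom)
    then show "{x ^ 2, x ^ 3} \<subseteq> int_poly_eval x ` {p. coeff p 1 = 0}"
      by simp
    show "1 \<in> int_poly_eval x ` {p. coeff p 1 = 0}"
      by (rule image_eqI[of _ _ 1]) simp_all
  qed (auto simp: coeff_mult_1[unfolded One_nat_def] simp flip: int_poly_eval.hom_add
      int_poly_eval.hom_uminus int_poly_eval.hom_mult)
  show "int_poly_eval x ` {p. coeff p 1 = 0} \<subseteq> subring_gen {x ^ 2, x ^ 3}"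
  proof clarify
    fix p :: "int poly" assume "coeff p 1 = 0"
    then obtain c q where "p = pCons c (pCons 0 q)"
      by (metis coeff_pCons_0 coeff_pCons_Suc One_nat_def pCons_cases)
    then have "int_poly_eval x p = of_int c + x ^ 2 * int_poly_eval x q"
      by (simp add: int_poly_eval_pCons power2_eq_square)
    then show "int_poly_eval x p \<in> subring_gen {x ^ 2, x ^ 3}"
      using subring_gen_square_cube_mult[of x q] by (auto intro: subring_gen.add subring_gen_of_int)
  qed
qed

lemma poly_divide_mult_power:
  fixes a b :: "'a::field"
  assumes "b \<noteq> 0"
  shows "poly p (a / b) * b ^ degree p = (\<Sum>i\<le>degree p. coeff p i * a ^ i * b ^ (degree p - i))"
proof -
  have "(a / b) ^ i * b ^ degree p = a ^ i * b ^ (degree p - i)" if "i \<le> degree p" for i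
    using that assms by (simp add: power_divide power_diff)
  then show ?thesis
    by (simp add: poly_altdef sum_distrib_right mult.assoc)
qed

lemma monic_homogeneous_root_dvd:
  fixes a b :: "'b::factorial_ring_gcd"
  assumes monic: "lead_coeff Q = 1" and "b \<noteq> 0"
    and root: "(\<Sum>i\<le>degree Q. coeff Q i * a ^ i * b ^ (degree Q - i)) = 0"
  shows "b dvd a"
proof -
  define n where "n = degree Q"
  define g where "g = gcd a b"
  have "g \<noteq> 0" using \<open>b \<noteq> 0\<close> g_def by simp
  then obtain a' b' where a': "a = a' * g" and b': "b = b' * g" and "coprime a' b'"
    using gcd_coprime_exists unfolding g_def by blast
  have "g ^ i * g ^ (n - i) = g ^ n" if "i \<le> n" for i
    using that by (simp flip: power_add)
  then have "(\<Sum>i\<le>n. coeff Q i * a ^ i * b ^ (n - i)) =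
      g ^ n * (\<Sum>i\<le>n. coeff Q i * a' ^ i * b' ^ (n - i))"
    unfolding a' b' sum_distrib_left
    by (intro sum.cong) (simp_all add: power_mult_distrib mult_ac)
  with root \<open>g \<noteq> 0\<close> have "(\<Sum>i\<le>n. coeff Q i * a' ^ i * b' ^ (n - i)) = 0"
    by (simp add: n_def)
  then have "a' ^ n = - (\<Sum>i<n. coeff Q i * a' ^ i * b' ^ (n - i))"
    using monic by (simp add: n_def lessThan_Suc_atMost[symmetric] eq_neg_iff_add_eq_0 add.commute)
  moreover have "b' dvd (\<Sum>i<n. coeff Q i * a' ^ i * b' ^ (n - i))"
    by (intro dvd_sum) simp
  ultimately have "b' dvd a' ^ n" by simp
  with \<open>coprime a' b'\<close> have "is_unit b'"
    by (metis coprime_commute coprime_common_divisor coprime_power_right_iff dvd_refl)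
  then show ?thesis
    using a' b' by (simp add: unit_imp_dvd)
qed

lemma int_poly_eval_integrally_closed:
  fixes x :: "'a::field"
  assumes inj: "inj (int_poly_eval x)" and "b \<noteq> 0"
    and P: "poly_over (range (int_poly_eval x)) P" "lead_coeff P = 1"
    and root: "poly P (int_poly_eval x a / int_poly_eval x b) = 0"
  shows "int_poly_eval x a / int_poly_eval x b \<in> range (int_poly_eval x)"
proof -
  obtain Q where Q: "P = map_poly (int_poly_eval x) Q"
    using int_poly_eval.poly_over_range_map_poly[OF P(1)] .
  have nonzero: "int_poly_eval x q \<noteq> 0" if "q \<noteq> 0" for q
    using inj that by (metis injD int_poly_eval.hom_zero)
  have "degree P = degree Q"
    unfolding Q using nonzero by (rule degree_map_poly)
  with P(2) have "int_poly_eval x (lead_coeff Q) = int_poly_eval x 1"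
    by (simp add: Q coeff_map_poly)
  then have "lead_coeff Q = 1"
    by (rule injD[OF inj])
  have "0 = poly P (int_poly_eval x a / int_poly_eval x b) * int_poly_eval x b ^ degree P"
    using root by simp
  also have "\<dots> = (\<Sum>i\<le>degree P. coeff P i * int_poly_eval x a ^ i *
      int_poly_eval x b ^ (degree P - i))"
    using nonzero \<open>b \<noteq> 0\<close> by (intro poly_divide_mult_power) simp
  also have "\<dots> = int_poly_eval x (\<Sum>i\<le>degree Q. coeff Q i * a ^ i * b ^ (degree Q - i))"
    unfolding \<open>degree P = degree Q\<close>
    by (simp add: Q coeff_map_poly int_poly_eval.hom_sum int_poly_eval.hom_mult
        int_poly_eval.hom_power)
  finally have "(\<Sum>i\<le>degree Q. coeff Q i * a ^ i * b ^ (degree Q - i)) = 0"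
    using nonzero by fastforce
  then obtain c where "a = b * c"
    using monic_homogeneous_root_dvd[OF \<open>lead_coeff Q = 1\<close> \<open>b \<noteq> 0\<close>] by auto
  then have "int_poly_eval x a / int_poly_eval x b = int_poly_eval x c"
    using nonzero[OF \<open>b \<noteq> 0\<close>] by (simp add: int_poly_eval.hom_mult)
  then show ?thesis by simp
qed

definition inner_coeff :: "nat \<Rightarrow> 'a::zero poly poly \<Rightarrow> 'a poly" where
  "inner_coeff n P = map_poly (\<lambda>p. coeff p n) P"

interpretation coeff_0: ring_hom "\<lambda>p :: 'a::comm_ring_1 poly. coeff p 0"
  by unfold_locales (simp_all add: coeff_mult_0)

lemma coeff_inner_coeff: "coeff (inner_coeff n P) i = coeff (coeff P i) n"
  by (simp add: inner_coeff_def coeff_map_poly)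

lemma inner_coeff_zero [simp]: "inner_coeff n 0 = 0"
  by (simp add: inner_coeff_def)

lemma inner_coeff_pCons: "inner_coeff n (pCons a P) = pCons (coeff a n) (inner_coeff n P)"
  by (simp add: inner_coeff_def map_poly_pCons)

lemma inner_coeff_add: "inner_coeff n (P + Q) = inner_coeff n P + inner_coeff n Q"
  by (rule poly_eqI) (simp add: coeff_inner_coeff)

lemma inner_coeff_0_mult:
  "inner_coeff 0 (P * Q) = inner_coeff 0 P * inner_coeff 0 (Q :: 'a::comm_ring_1 poly poly)"
  unfolding inner_coeff_def by (rule coeff_0.map_poly_hom_mult)

lemma inner_coeff_0_pcompose:
  "inner_coeff 0 (pcompose P Q) =
     pcompose (inner_coeff 0 P) (inner_coeff 0 (Q :: 'a::comm_ring_1 poly poly))"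
  unfolding inner_coeff_def by (rule coeff_0.map_poly_hom_pcompose)

lemma inner_coeff_1_mult:
  "inner_coeff 1 (P * Q) =
     inner_coeff 0 P * inner_coeff 1 Q + inner_coeff 1 P * inner_coeff 0 (Q :: 'a::comm_ring_1 poly poly)"
proof (induction P)
  case (pCons a P)
  have "inner_coeff 1 (smult a Q) =
      smult (coeff a 0) (inner_coeff 1 Q) + smult (coeff a 1) (inner_coeff 0 Q)"
    by (rule poly_eqI) (simp add: coeff_inner_coeff coeff_mult_1[unfolded One_nat_def])
  then show ?case
    using pCons.IH by (simp add: inner_coeff_pCons inner_coeff_add algebra_simps)
qed simp

lemma inner_coeff_1_pcompose:
  "inner_coeff 1 (pcompose P Q) =
     pcompose (inner_coeff 1 P) (inner_coeff 0 Q) +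
     pcompose (pderiv (inner_coeff 0 P)) (inner_coeff 0 Q) * inner_coeff 1 (Q :: 'a::idom poly poly)"
proof (induction P)
  case (pCons a P)
  then show ?case
    by (simp add: pcompose_pCons inner_coeff_pCons inner_coeff_add inner_coeff_0_mult
        inner_coeff_1_mult[unfolded One_nat_def] inner_coeff_0_pcompose pderiv_pCons pcompose_add
        algebra_simps)
qed simp

lemma pcompose_add_pderiv_pcompose_mult_eq_0:
  fixes G0 G1 H0 H1 :: "'a::{idom,ring_char_0} poly"
  assumes eq: "pcompose G1 H0 + pcompose (pderiv G0) H0 * H1 = 0"
    and "degree G0 \<ge> 1" and "degree H1 < degree H0" and "coeff H1 0 = 0"
  shows "G1 = 0 \<and> H1 = 0"
proof -
  define s where "s = degree H0"
  have "s > 0" using \<open>degree H1 < degree H0\<close> s_def by simp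
  have "H1 = 0"
  proof (rule ccontr)
    assume "H1 \<noteq> 0"
    define e where "e = degree H1"
    have "e \<noteq> 0"
      using \<open>H1 \<noteq> 0\<close> \<open>coeff H1 0 = 0\<close> e_def by (metis degree_0_id pCons_0_0)
    have "pderiv G0 \<noteq> 0"
      using \<open>degree G0 \<ge> 1\<close> by (simp add: pderiv_eq_0_iff)
    then have "pcompose (pderiv G0) H0 \<noteq> 0"
      using \<open>s > 0\<close> s_def by (simp add: pcompose_eq_0_iff)
    then have "degree (pcompose (pderiv G0) H0 * H1) = (degree G0 - 1) * s + e"
      using \<open>H1 \<noteq> 0\<close> by (simp add: degree_mult_eq degree_pcompose degree_pderiv s_def e_def)
    moreover have "pcompose G1 H0 = - (pcompose (pderiv G0) H0 * H1)"
      using eq by (simp add: eq_neg_iff_add_eq_0)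
    ultimately have "degree G1 * s = (degree G0 - 1) * s + e"
      by (metis degree_minus degree_pcompose s_def)
    then have "(degree G1 * s) mod s = ((degree G0 - 1) * s + e) mod s"
      by (rule arg_cong)
    then have "e mod s = 0"
      by simp
    moreover have "e < s"
      using \<open>degree H1 < degree H0\<close> s_def e_def by simp
    ultimately show False
      using \<open>e \<noteq> 0\<close> by simp
  qed
  with eq have "pcompose G1 H0 = 0" by simp
  with \<open>s > 0\<close> s_def have "G1 = 0" by (simp add: pcompose_eq_0_iff)
  with \<open>H1 = 0\<close> show ?thesis by simp
qed

lemma unit_poly_coeffs:
  fixes c :: "'a::idom poly"
  assumes "c dvd 1"
  shows "coeff c 0 \<noteq> 0" and "coeff c 1 = 0"
  using assms by (auto simp: is_unit_poly_iff)

lemma inner_coeff_1_eq_0_of_pcompose: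
  fixes G H :: "'a::{idom,ring_char_0} poly poly"
  assumes comp: "inner_coeff 1 (pcompose G H) = 0"
    and G: "lead_coeff G dvd 1" "degree G \<ge> 1"
    and H: "lead_coeff H dvd 1" "degree H \<ge> 1" "coeff H 0 = 0"
  shows "inner_coeff 1 G = 0 \<and> inner_coeff 1 H = 0"
proof (rule pcompose_add_pderiv_pcompose_mult_eq_0)
  have degree_inner_coeff_0: "degree (inner_coeff 0 P) = degree P" if "lead_coeff P dvd 1"
    for P :: "'a poly poly"
    unfolding inner_coeff_def using unit_poly_coeffs(1)[OF that] by (rule map_poly_degree_eq)
  show "pcompose (inner_coeff 1 G) (inner_coeff 0 H) +
      pcompose (pderiv (inner_coeff 0 G)) (inner_coeff 0 H) * inner_coeff 1 H = 0"
    using comp by (simp only: inner_coeff_1_pcompose)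
  show "degree (inner_coeff 0 G) \<ge> 1"
    using G by (simp add: degree_inner_coeff_0)
  have "degree (inner_coeff 1 H) \<le> degree H - 1"
  proof (rule degree_le, intro allI impI)
    fix i assume "degree H - 1 < i"
    then consider "i = degree H" | "i > degree H" by linarith
    then show "coeff (inner_coeff 1 H) i = 0"
      by cases (simp_all add: coeff_inner_coeff unit_poly_coeffs(2)[OF H(1), unfolded One_nat_def]
          coeff_eq_0)
  qed
  then show "degree (inner_coeff 1 H) < degree (inner_coeff 0 H)"
    using H by (simp add: degree_inner_coeff_0)
  show "coeff (inner_coeff 1 H) 0 = 0"
    using H by (simp add: coeff_inner_coeff)
qed

lemma pcompose_unit_lead_coeffs:
  fixes G H :: "'a::idom poly"
  assumes "lead_coeff (pcompose G H) = 1" "degree G \<ge> 1" "degree H \<ge> 1"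
  shows "lead_coeff G dvd 1" "lead_coeff H dvd 1"
proof -
  have unit: "lead_coeff G * lead_coeff H ^ degree G = 1"
    using assms by (simp add: lead_coeff_comp)
  then show "lead_coeff G dvd 1"
    by (rule dvdI[OF sym])
  have "lead_coeff H dvd lead_coeff H ^ degree G"
    using assms(2) by simp
  also have "\<dots> dvd 1"
    using unit by (metis dvdI mult.commute)
  finally show "lead_coeff H dvd 1" .
qed

lemma pcompose_shift:
  fixes G H :: "'a::comm_ring_1 poly"
  shows "pcompose G H = pcompose (pcompose G [:c, 1:]) (H + [:- c:])"
proof -
  have "pcompose [:c, 1:] (H + [:- c:]) = H"
    by (simp add: pcompose_pCons algebra_simps)
  then show ?thesis
    by (simp add: pcompose_assoc[symmetric])
qed

lemma pcompose_eq_with_inner_coeff_1_eq_0: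
  fixes G H :: "'a::{idom,ring_char_0} poly poly"
  assumes comp: "inner_coeff 1 (pcompose G H) = 0" "lead_coeff (pcompose G H) = 1"
    and deg: "degree G \<ge> 1" "degree H \<ge> 1"
  obtains G' H' where "pcompose G H = pcompose G' H'" "degree G' = degree G" "degree H' = degree H"
    "inner_coeff 1 G' = 0" "inner_coeff 1 H' = 0"
proof
  define G' where "G' = pcompose G [:coeff H 0, 1:]"
  define H' where "H' = H + [:- coeff H 0:]"
  show GH: "pcompose G H = pcompose G' H'"
    unfolding G'_def H'_def by (rule pcompose_shift)
  show deg_G': "degree G' = degree G"
    by (simp add: G'_def degree_pcompose)
  show deg_H': "degree H' = degree H"
    using deg unfolding H'_def by (intro degree_add_eq_left) simp
  have "lead_coeff G' = lead_coeff G"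
    by (simp add: G'_def lead_coeff_comp)
  moreover have "lead_coeff H' = lead_coeff H"
    using deg deg_H' by (simp add: H'_def coeff_pCons split: nat.split)
  moreover have "coeff H' 0 = 0"
    by (simp add: H'_def)
  ultimately have "inner_coeff 1 G' = 0 \<and> inner_coeff 1 H' = 0"
    using comp deg pcompose_unit_lead_coeffs[of G H] deg_G' deg_H'
    by (intro inner_coeff_1_eq_0_of_pcompose) (simp_all flip: GH)
  then show "inner_coeff 1 G' = 0" "inner_coeff 1 H' = 0" by simp_all
qed

lemma poly_over_mono: "poly_over A p \<Longrightarrow> A \<subseteq> B \<Longrightarrow> poly_over B p"
  unfolding poly_over_def by blast

lemma poly_over_square_cube_iff:
  assumes inj: "inj (int_poly_eval x)"
  shows "poly_over (subring_gen {x ^ 2, x ^ 3}) (map_poly (int_poly_eval x) P) \<longleftrightarrow>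
    inner_coeff 1 P = 0"
proof -
  have "int_poly_eval x p \<in> int_poly_eval x ` {q. coeff q 1 = 0} \<longleftrightarrow> coeff p 1 = 0" for p
    using inj by (auto simp: inj_eq)
  then show ?thesis
    by (auto simp: poly_over_def subring_gen_square_cube coeff_map_poly coeff_inner_coeff
        poly_eq_iff simp del: One_nat_def)
qed

lemma decomposable_over_square_cube_subring:
  assumes inj: "inj (int_poly_eval x)"
    and f: "poly_over (subring_gen {x ^ 2, x ^ 3}) f" "lead_coeff f = 1"
    and dec: "decomposable_over (subring_gen {x}) f"
  shows "decomposable_over (subring_gen {x ^ 2, x ^ 3}) f"
proof -
  let ?ev = "map_poly (int_poly_eval x)"
  obtain g h where gh: "poly_over (range (int_poly_eval x)) g" "poly_over (range (int_poly_eval x)) h"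
    "degree g \<ge> 2" "degree h \<ge> 2" "f = pcompose g h"
    using dec unfolding decomposable_over_def subring_gen_singleton by blast
  obtain G H where G: "g = ?ev G" and H: "h = ?ev H"
    using gh(1,2) by (metis int_poly_eval.poly_over_range_map_poly)
  have f_GH: "f = ?ev (pcompose G H)"
    using gh(5) by (simp add: G H int_poly_eval.map_poly_hom_pcompose)
  have deg: "degree G \<ge> 2" "degree H \<ge> 2"
    using gh(3,4) by (simp_all add: G H int_poly_eval.degree_map_poly_inj[OF inj])
  have "int_poly_eval x (lead_coeff (pcompose G H)) = int_poly_eval x 1"
    using f(2) by (simp add: f_GH coeff_map_poly int_poly_eval.degree_map_poly_inj[OF inj])
  then have "lead_coeff (pcompose G H) = 1"
    by (rule injD[OF inj])
  moreover have "inner_coeff 1 (pcompose G H) = 0"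
    using f(1) by (simp add: f_GH poly_over_square_cube_iff[OF inj])
  ultimately obtain G' H' where "pcompose G H = pcompose G' H'"
    "degree G' = degree G" "degree H' = degree H" "inner_coeff 1 G' = 0" "inner_coeff 1 H' = 0"
    using deg by (elim pcompose_eq_with_inner_coeff_1_eq_0) simp_all
  then show ?thesis
    unfolding decomposable_over_def using deg
    by (intro exI[of _ "?ev G'"] exI[of _ "?ev H'"])
      (simp add: poly_over_square_cube_iff[OF inj] f_GH int_poly_eval.map_poly_hom_pcompose
        int_poly_eval.degree_map_poly_inj[OF inj])
qed

lemma inj_int_poly_eval_imp_nonzero:
  assumes "inj (int_poly_eval x)"
  shows "x \<noteq> 0"
  using injD[OF assms, of "[:0, 1:]" 0] by (auto simp: int_poly_eval_X)

lemma integral_closure_square_cube: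
  fixes x :: "'a::field"
  assumes inj: "inj (int_poly_eval x)"
  defines "R \<equiv> subring_gen {x ^ 2, x ^ 3}"
  shows "integral_closure R (frac_field R) = subring_gen {x}"
proof (intro equalityI subsetI)
  have R: "R = int_poly_eval x ` {p. coeff p 1 = 0}"
    unfolding R_def by (rule subring_gen_square_cube)
  fix y assume "y \<in> integral_closure R (frac_field R)"
  then obtain P a b where P: "poly_over R P" "lead_coeff P = 1" "poly P y = 0"
    and ab: "y = a / b" "a \<in> R" "b \<in> R" "b \<noteq> 0"
    unfolding integral_closure_def frac_field_def by blast
  then obtain a' b' where "a = int_poly_eval x a'" "b = int_poly_eval x b'"
    unfolding R by blast
  moreover have "b' \<noteq> 0"
    using ab(4) \<open>b = int_poly_eval x b'\<close> by auto
  moreover have "poly_over (range (int_poly_eval x)) P"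
    using P(1) R by (auto intro: poly_over_mono)
  ultimately show "y \<in> subring_gen {x}"
    using int_poly_eval_integrally_closed[OF inj] P ab
    unfolding subring_gen_singleton by blast
next
  fix y assume "y \<in> subring_gen {x}"
  then obtain c q where y: "y = int_poly_eval x (pCons c q)"
    unfolding subring_gen_singleton by (metis imageE pCons_cases)
  define z where "z = x * int_poly_eval x q"
  have "y = of_int c + z"
    by (simp add: y z_def int_poly_eval_pCons)
  have "x ^ 2 \<noteq> 0"
    using inj_int_poly_eval_imp_nonzero[OF inj] by simp
  moreover have "x ^ 2 * y \<in> R" "x ^ 2 \<in> R"
    unfolding R_def using subring_gen_square_cube_mult[of x "pCons c q"]
    by (simp_all add: y subring_gen.gen)
  ultimately have "y \<in> frac_field R"
    unfolding frac_field_def by (intro CollectI exI[of _ "x ^ 2 * y"] exI[of _ "x ^ 2"]) simp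
  have "z ^ 2 \<in> R"
    using subring_gen_square_cube_mult[of x "q ^ 2"] unfolding R_def
    by (simp add: z_def power_mult_distrib int_poly_eval.hom_power)
  then have "of_int c ^ 2 - z ^ 2 \<in> R"
    unfolding R_def using subring_gen.add[OF subring_gen_of_int[of "c ^ 2"] subring_gen.neg]
    by simp
  moreover have "- 2 * of_int c \<in> R" "1 \<in> R" "0 \<in> R"
    unfolding R_def using subring_gen_of_int[of "- 2 * c"]
    by (simp_all add: subring_gen.one subring_gen_zero)
  ultimately have "poly_over R [:of_int c ^ 2 - z ^ 2, - 2 * of_int c, 1:]"
    unfolding poly_over_def by (simp add: coeff_pCons split: nat.split)
  moreover have "poly [:of_int c ^ 2 - z ^ 2, - 2 * of_int c, 1:] y = 0"
    by (simp add: \<open>y = of_int c + z\<close> algebra_simps power2_eq_square)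
  ultimately show "y \<in> integral_closure R (frac_field R)"
    using \<open>y \<in> frac_field R\<close> unfolding integral_closure_def by fastforce
qed

lemma square_cube_subring_ne:
  assumes "inj (int_poly_eval x)"
  shows "subring_gen {x} \<noteq> subring_gen {x ^ 2, x ^ 3}"
proof
  assume "subring_gen {x} = subring_gen {x ^ 2, x ^ 3}"
  then have "x \<in> int_poly_eval x ` {p. coeff p 1 = 0}"
    by (metis insertI1 subring_gen.gen subring_gen_square_cube)
  then obtain p where p: "x = int_poly_eval x p" "coeff p 1 = 0"
    by (rule imageE) simp
  then have "p = [:0, 1:]"
    by (metis injD[OF assms] int_poly_eval_X)
  with p(2) show False
    by simp
qed

lemma transcendental_over_Q_imp_inj:
  fixes t :: "'a::field_char_0"
  assumes "transcendental_over_Q t"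
  shows "inj (int_poly_eval t)"
proof (rule injI, rule ccontr)
  fix p q assume eq: "int_poly_eval t p = int_poly_eval t q" and "p \<noteq> q"
  define r :: "rat poly" where "r = map_poly of_int (p - q)"
  have "r \<noteq> 0"
    using \<open>p \<noteq> q\<close> by (simp add: r_def map_poly_eq_0_iff)
  then have "poly (map_poly of_rat r) t \<noteq> 0"
    using assms unfolding transcendental_over_Q_def by blast
  moreover have "map_poly of_rat r = (map_poly of_int (p - q) :: 'a poly)"
    by (simp add: r_def map_poly_map_poly o_def)
  ultimately show False
    using eq by (simp add: int_poly_eval_def[symmetric] int_poly_eval.hom_diff)
qed

theorem mainTheorem3:
  fixes t :: "'a::field_char_0"
  assumes "transcendental_over_Q t"
  defines "R \<equiv> subring_gen {t ^ 2, t ^ 3}"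
  defines "S \<equiv> integral_closure R (frac_field R)"
  shows "S = subring_gen {t} \<and> S \<noteq> R \<and>
         (\<forall>f. poly_over R f \<and> lead_coeff f = 1 \<and> degree f \<ge> 2 \<and> decomposable_over S f
              \<longrightarrow> decomposable_over R f)"
proof -
  have inj: "inj (int_poly_eval t)"
    using assms(1) by (rule transcendental_over_Q_imp_inj)
  have S: "S = subring_gen {t}"
    unfolding S_def R_def using inj by (rule integral_closure_square_cube)
  show ?thesis
    using S square_cube_subring_ne[OF inj] decomposable_over_square_cube_subring[OF inj]
    unfolding R_def by blast
qed

end
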